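(* Let $\mathcal G=((V,E),(V_1,V_2,V_\Diamond),\delta,w)$ be a stochastic game and let $\mathsf r$ be a real vector indexed by $V$ that satisfies the Bellman condition, with classes $C_1,\dots,C_k$. Then for every $1\le i\le k$, $\mathcal G_{C_i}$ is a stochastic game, i.e., every vertex of $\mathcal G_{C_i}$ has at least one out-neighbour in $\mathcal G_{C_i}$ and for every probabilistic vertex of $\mathcal G_{C_i}$ the probabilities of its out-edges in $\mathcal G_{C_i}$ sum to $1$.
   Context: A stochastic game is $\mathcal{G}=((V,E),(V_1,V_2,V_\Diamond),\delta,w)$: a finite directed graph $(V,E)$ in which every vertex $v$ has a nonempty out-neighbour set $E(v)$, a partition of $V$ into Player 1, Player 2 and probabilistic vertices, a function $\delta$ giving each $v\in V_\Diamond$ a probability distribution $\delta(v)$ on $E(v)$, positive on every out-neighbour, and payoffs $w:E\to\mathbb{Q}$. For a real vector $\mathsf r=(r_v)_{v\in V}$, its classes $C_1,\dots,C_k$ are the maximal nonempty sets of vertices on which $\mathsf r$ is constant. A vertex $v\in C_i$ is a boundary vertex if $v\in V_\Diamond$ and $E(v)\not\subseteq C_i$; $\mathrm{Bnd}_i$ is the set of boundary vertices of $C_i$. $\mathcal G_{C_i}$ is obtained by restricting $\mathcal G$ to the vertices of $C_i$ (keeping the edges of $\mathcal G$ between vertices of $C_i$, ownership, probabilities and payoffs) and changing every vertex of $\mathrm{Bnd}_i$ into an absorbing vertex whose only out-edge is a self-loop (probability 1, payoff 0). $\mathsf r$ satisfies the Bellman condition if for every $v$: $r_v=\max_{v'\in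 E(v)}r_{v'}$ if $v\in V_1$, $r_v=\min_{v'\in E(v)}r_{v'}$ if $v\in V_2$, $r_v=\sum_{v'\in E(v)}\delta(v)(v')r_{v'}$ if $v\in V_\Diamond$. *)

theory Defs
  imports Complex_Main
begin

record 'v sgame =
  verts :: "'v set"
  edges :: "('v \<times> 'v) set"
  V1 :: "'v set"
  V2 :: "'v set"
  Vp :: "'v set"
  delta :: "'v \<Rightarrow> 'v \<Rightarrow> real"
  payoff :: "'v \<times> 'v \<Rightarrow> rat"

definition succs :: "('v, 'a) sgame_scheme \<Rightarrow> 'v \<Rightarrow> 'v set" where
  "succs G v = {u. (v, u) \<in> edges G}"

definition stochastic_game :: "('v, 'a) sgame_scheme \<Rightarrow> bool" where
  "stochastic_game G \<longleftrightarrow>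
     finite (verts G) \<and>
     edges G \<subseteq> verts G \<times> verts G \<and>
     (\<forall>v \<in> verts G. succs G v \<noteq> {}) \<and>
     V1 G \<union> V2 G \<union> Vp G = verts G \<and>
     V1 G \<inter> V2 G = {} \<and> V1 G \<inter> Vp G = {} \<and> V2 G \<inter> Vp G = {} \<and>
     (\<forall>v \<in> Vp G. (\<forall>u \<in> succs G v. delta G v u > 0) \<and>
                  (\<Sum>u \<in> succs G v. delta G v u) = 1)"

definition is_class :: "('v, 'a) sgame_scheme \<Rightarrow> ('v \<Rightarrow> real) \<Rightarrow> 'v set \<Rightarrow> bool" where
  "is_class G r C \<longleftrightarrow> C \<noteq> {} \<and> (\<exists>c. C = {v \<in> verts G. r v = c})"

definition bnd :: "('v, 'a) sgame_scheme \<Rightarrow> 'v set \<Rightarrow> 'v set" where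
  "bnd G C = {v \<in> C. v \<in> Vp G \<and> \<not> succs G v \<subseteq> C}"

definition restrict_game :: "('v, 'a) sgame_scheme \<Rightarrow> 'v set \<Rightarrow> 'v sgame" where
  "restrict_game G C =
     \<lparr> verts = C,
       edges = {(v, u). (v, u) \<in> edges G \<and> v \<in> C - bnd G C \<and> u \<in> C}
               \<union> {(b, b) | b. b \<in> bnd G C},
       V1 = V1 G \<inter> C,
       V2 = V2 G \<inter> C,
       Vp = Vp G \<inter> C,
       delta = (\<lambda>v u. if v \<in> bnd G C then (if u = v then 1 else 0) else delta G v u),
       payoff = (\<lambda>(v, u). if v \<in> bnd G C then 0 else payoff G (v, u)) \<rparr>"

definition bellman :: "('v, 'a) sgame_scheme \<Rightarrow> ('v \<Rightarrow> real) \<Rightarrow> bool" where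
  "bellman G r \<longleftrightarrow>
     (\<forall>v \<in> V1 G. r v = Max (r ` succs G v)) \<and>
     (\<forall>v \<in> V2 G. r v = Min (r ` succs G v)) \<and>
     (\<forall>v \<in> Vp G. r v = (\<Sum>u \<in> succs G v. delta G v u * r u))"

end

theory Submission
  imports Defs
begin

text \<open>A Player 1 or Player 2 vertex attains its Bellman value (a max or min over its
successors) at some successor, which therefore lies in the same class; a probabilistic
vertex that is not a boundary vertex has all its successors in its class. So every
non-boundary vertex keeps an edge inside its class, boundary vertices get a self-loop, and
a non-boundary probabilistic vertex keeps its whole distribution.\<close>

lemma restrict_game_simps [simp]:
  "verts (restrict_game G C) = C"
  "V1 (restrict_game G C) = V1 G \<inter> C"
  "V2 (restrict_game G C) = V2 G \<inter> C"
  "Vp (restrict_game G C) = Vp G \<inter> C"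
  by (simp_all add: restrict_game_def)

lemma succs_restrict_game:
  assumes "v \<in> C"
  shows "succs (restrict_game G C) v = (if v \<in> bnd G C then {v} else succs G v \<inter> C)"
  using assms unfolding succs_def restrict_game_def by auto

lemma stochastic_gameD:
  assumes "stochastic_game G"
  shows "finite (verts G)" and "edges G \<subseteq> verts G \<times> verts G"
    and "v \<in> verts G \<Longrightarrow> succs G v \<noteq> {}"
    and "V1 G \<union> V2 G \<union> Vp G = verts G"
    and "V1 G \<inter> V2 G = {}" and "V1 G \<inter> Vp G = {}" and "V2 G \<inter> Vp G = {}"
    and "v \<in> Vp G \<Longrightarrow> u \<in> succs G v \<Longrightarrow> delta G v u > 0"
    and "v \<in> Vp G \<Longrightarrow> (\<Sum>u \<in> succs G v. delta G v u) = 1"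
  using assms unfolding stochastic_game_def by blast+

lemma succs_subset_verts:
  assumes "stochastic_game G"
  shows "succs G v \<subseteq> verts G"
  using stochastic_gameD(2)[OF assms] unfolding succs_def by blast

lemma finite_succs:
  assumes "stochastic_game G"
  shows "finite (succs G v)"
  using stochastic_gameD(1)[OF assms] succs_subset_verts[OF assms] by (rule finite_subset[rotated])

lemma bellman_value_attained:
  assumes "stochastic_game G" "bellman G r" "v \<in> V1 G \<union> V2 G"
  shows "\<exists>u \<in> succs G v. r u = r v"
proof -
  have "v \<in> verts G" using stochastic_gameD(4)[OF assms(1)] assms(3) by blast
  then have "succs G v \<noteq> {}" by (rule stochastic_gameD(3)[OF assms(1)])
  then have "Max (r ` succs G v) \<in> r ` succs G v" "Min (r ` succs G v) \<in> r ` succs G v"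
    using finite_succs[OF assms(1)] by simp_all
  moreover have "r v = Max (r ` succs G v) \<or> r v = Min (r ` succs G v)"
    using assms(2,3) unfolding bellman_def by blast
  ultimately show ?thesis by (auto simp: image_iff)
qed

lemma class_eq_level_set:
  assumes "is_class G r C" "v \<in> C"
  shows "C = {u \<in> verts G. r u = r v}"
  using assms unfolding is_class_def by auto

lemma succ_in_class:
  assumes "stochastic_game G" "bellman G r" "is_class G r C" "v \<in> C" "v \<notin> bnd G C"
  shows "succs G v \<inter> C \<noteq> {}"
proof -
  have C: "C = {u \<in> verts G. r u = r v}" using class_eq_level_set[OF assms(3,4)] .
  then have "v \<in> verts G" using assms(4) by blast
  then have "succs G v \<noteq> {}" and "v \<in> V1 G \<union> V2 G \<or> v \<in> Vp G"
    using stochastic_gameD(3,4)[OF assms(1)] by blast+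
  then show ?thesis
  proof (elim disjE)
    assume "v \<in> V1 G \<union> V2 G"
    then obtain u where "u \<in> succs G v" "r u = r v"
      using bellman_value_attained[OF assms(1,2)] by blast
    then show ?thesis using C succs_subset_verts[OF assms(1)] by blast
  next
    assume "v \<in> Vp G"
    then have "succs G v \<subseteq> C" using assms(4,5) unfolding bnd_def by blast
    then show ?thesis using \<open>succs G v \<noteq> {}\<close> by blast
  qed
qed

lemma succs_restrict_game_nonempty:
  assumes "stochastic_game G" "bellman G r" "is_class G r C" "v \<in> C"
  shows "succs (restrict_game G C) v \<noteq> {}"
  using succs_restrict_game[OF assms(4), of G] succ_in_class[OF assms] by auto

lemma restrict_game_distribution:
  assumes "stochastic_game G" "v \<in> Vp G" "v \<in> C"
  shows "(\<forall>u \<in> succs (restrict_game G C) v. delta (restrict_game G C) v u > 0)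
    \<and> (\<Sum>u \<in> succs (restrict_game G C) v. delta (restrict_game G C) v u) = 1"
proof (cases "v \<in> bnd G C")
  case True
  then have "succs (restrict_game G C) v = {v}" using succs_restrict_game[OF assms(3), of G] by simp
  then show ?thesis using True by (simp add: restrict_game_def)
next
  case False
  then have "succs (restrict_game G C) v = succs G v"
    using succs_restrict_game[OF assms(3), of G] assms(2,3) unfolding bnd_def by auto
  moreover have "delta (restrict_game G C) v = delta G v"
    using False by (simp add: restrict_game_def)
  ultimately show ?thesis using stochastic_gameD(8,9)[OF assms(1,2)] by simp
qed

theorem proposition3:
  fixes G :: "'v sgame" and r :: "'v \<Rightarrow> real" and C :: "'v set"
  assumes "stochastic_game G"
    and "bellman G r"
    and "is_class G r C"
  shows "stochastic_game (restrict_game G C)"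
proof -
  have "C \<subseteq> verts G" using assms(3) unfolding is_class_def by blast
  show ?thesis
    unfolding stochastic_game_def restrict_game_simps
  proof (intro conjI)
    show "finite C"
      using \<open>C \<subseteq> verts G\<close> stochastic_gameD(1)[OF assms(1)] by (rule finite_subset)
    show "edges (restrict_game G C) \<subseteq> C \<times> C"
      by (auto simp: restrict_game_def bnd_def)
    show "\<forall>v \<in> C. succs (restrict_game G C) v \<noteq> {}"
      using succs_restrict_game_nonempty[OF assms] by blast
    show "V1 G \<inter> C \<union> V2 G \<inter> C \<union> Vp G \<inter> C = C"
      using stochastic_gameD(4)[OF assms(1)] \<open>C \<subseteq> verts G\<close> by blast
    show "V1 G \<inter> C \<inter> (V2 G \<inter> C) = {}" "V1 G \<inter> C \<inter> (Vp G \<inter> C) = {}"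
      "V2 G \<inter> C \<inter> (Vp G \<inter> C) = {}"
      using stochastic_gameD(5-7)[OF assms(1)] by blast+
    show "\<forall>v \<in> Vp G \<inter> C.
        (\<forall>u \<in> succs (restrict_game G C) v. delta (restrict_game G C) v u > 0)
        \<and> (\<Sum>u \<in> succs (restrict_game G C) v. delta (restrict_game G C) v u) = 1"
      using restrict_game_distribution[OF assms(1)] by blast
  qed
qed

end
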